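(* Let $(\mathfrak{g},\langle\cdot,\cdot\rangle)$ be a quadratic Lie algebra with $H^2(\mathfrak{g})=\{0\}$ and let $(\mathfrak{h},\theta_1,\dots,\theta_k)$ be a $k$-symplectic structure on $\mathfrak{g}$. Then $\mathfrak{h}$ is degenerate with respect to $\langle\cdot,\cdot\rangle$, i.e. the restriction of $\langle\cdot,\cdot\rangle$ to $\mathfrak{h}$ is degenerate.
   Context: A quadratic Lie algebra is a finite-dimensional real Lie algebra $\mathfrak{g}$ endowed with a nondegenerate symmetric bilinear form $\langle\cdot,\cdot\rangle$ which is invariant: $\langle [u,v],w\rangle+\langle [u,w],v\rangle=0$ for all $u,v,w\in\mathfrak{g}$. $H^2(\mathfrak{g})$ denotes the second Chevalley–Eilenberg cohomology group of $\mathfrak{g}$ with trivial real coefficients. A $k$-symplectic structure on a real Lie algebra $\mathfrak{g}$ of dimension $n(k+1)$ ($n,k\ge1$) is a pair consisting of a Lie subalgebra $\mathfrak{h}\subset\mathfrak{g}$ of dimension $nk$ and a family $(\theta_1,\dots,\theta_k)$ of skew-symmetric bilinear forms on $\mathfrak{g}$ such that: (i) $\bigcap_{i=1}^k\ker\theta_i=\{0\}$, where $\ker\theta_i=\{u\in\mathfrak{g}:\theta_i(u,v)=0\ \forall v\in\mathfrak{g}\}$; (ii) each $\theta_i$ is a 2-cocycle: $\theta_i([u,v],w)+\theta_i([v,w],u)+\theta_i([w,u],v)=0$ for all $u,v,w$; (iii) $\theta_i(u,v)=0$ for all $u,v\in\mathfrak{h}$ and all $i$. *)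

theory Defs
  imports "HOL-Analysis.Analysis"
begin

text \<open>A finite-dimensional real vector space is modelled by a type of class euclidean_space
(its built-in inner product plays no role).\<close>

definition lie_bracket :: "('a::euclidean_space \<Rightarrow> 'a \<Rightarrow> 'a) \<Rightarrow> bool" where
  "lie_bracket br \<longleftrightarrow> bilinear br \<and> (\<forall>u. br u u = 0) \<and>
     (\<forall>u v w. br u (br v w) + br v (br w u) + br w (br u v) = 0)"

definition quadratic_form :: "('a::euclidean_space \<Rightarrow> 'a \<Rightarrow> 'a) \<Rightarrow> ('a \<Rightarrow> 'a \<Rightarrow> real) \<Rightarrow> bool" where
  "quadratic_form br B \<longleftrightarrow> bilinear B \<and> (\<forall>u v. B u v = B v u) \<and>
     (\<forall>u. (\<forall>v. B u v = 0) \<longrightarrow> u = 0) \<and>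
     (\<forall>u v w. B (br u v) w + B (br u w) v = 0)"

definition skew_form :: "('a::euclidean_space \<Rightarrow> 'a \<Rightarrow> real) \<Rightarrow> bool" where
  "skew_form \<theta> \<longleftrightarrow> bilinear \<theta> \<and> (\<forall>u v. \<theta> u v = - \<theta> v u)"

definition cocycle2 :: "('a::euclidean_space \<Rightarrow> 'a \<Rightarrow> 'a) \<Rightarrow> ('a \<Rightarrow> 'a \<Rightarrow> real) \<Rightarrow> bool" where
  "cocycle2 br \<theta> \<longleftrightarrow> (\<forall>u v w. \<theta> (br u v) w + \<theta> (br v w) u + \<theta> (br w u) v = 0)"

text \<open>H^2(g) = 0 with trivial real coefficients: every skew 2-cocycle is a coboundary,
i.e. of the form (u,v) \<mapsto> f([u,v]) for a linear form f (sign irrelevant).\<close>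

definition H2_trivial :: "('a::euclidean_space \<Rightarrow> 'a \<Rightarrow> 'a) \<Rightarrow> bool" where
  "H2_trivial br \<longleftrightarrow> (\<forall>\<theta>. skew_form \<theta> \<and> cocycle2 br \<theta> \<longrightarrow>
     (\<exists>f::'a \<Rightarrow> real. linear f \<and> (\<forall>u v. \<theta> u v = f (br u v))))"

definition k_symplectic ::
  "('a::euclidean_space \<Rightarrow> 'a \<Rightarrow> 'a) \<Rightarrow> nat \<Rightarrow> nat \<Rightarrow> 'a set \<Rightarrow> (nat \<Rightarrow> 'a \<Rightarrow> 'a \<Rightarrow> real) \<Rightarrow> bool" where
  "k_symplectic br n k h \<theta> \<longleftrightarrow>
     n \<ge> 1 \<and> k \<ge> 1 \<and> DIM('a) = n * (k + 1) \<and>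
     subspace h \<and> dim h = n * k \<and> (\<forall>u\<in>h. \<forall>v\<in>h. br u v \<in> h) \<and>
     (\<forall>u. (\<forall>i\<in>{1..k}. \<forall>v. \<theta> i u v = 0) \<longrightarrow> u = 0) \<and>
     (\<forall>i\<in>{1..k}. skew_form (\<theta> i) \<and> cocycle2 br (\<theta> i)) \<and>
     (\<forall>i\<in>{1..k}. \<forall>u\<in>h. \<forall>v\<in>h. \<theta> i u v = 0)"

end

theory Submission imports Defs begin

text \<open>Suppose \<open>h \<inter> h\<^sup>\<perp> = 0\<close>, so that \<open>dim h\<^sup>\<perp> \<le> n\<close>. Since \<open>H\<^sup>2(g) = 0\<close> and the form is
nondegenerate and invariant, each cocycle is \<open>\<theta>\<^sub>i(u,v) = \<langle>[z\<^sub>i,u],v\<rangle>\<close>. Isotropy of \<open>h\<close> gives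
\<open>ad z\<^sub>i (h) \<subseteq> h\<^sup>\<perp>\<close>, and \<open>\<Inter> ker \<theta>\<^sub>i = 0\<close> says the maps \<open>ad z\<^sub>i\<close> have no common kernel on \<open>h\<close>;
hence \<open>nk = dim h \<le> \<Sum> dim ad z\<^sub>i(h) \<le> k dim h\<^sup>\<perp> \<le> kn\<close>, which forces \<open>dim h\<^sup>\<perp> = n\<close>
and \<open>ad z\<^sub>1(h) = h\<^sup>\<perp>\<close>. Invariance makes \<open>z\<^sub>1\<close> orthogonal to \<open>[z\<^sub>1,g]\<close>, hence to \<open>h\<^sup>\<perp>\<close>,
so \<open>z\<^sub>1 \<in> h\<close>; as \<open>h\<close> is a subalgebra, \<open>h\<^sup>\<perp> = [z\<^sub>1,h] \<subseteq> h\<close>, contradicting \<open>h \<inter> h\<^sup>\<perp> = 0\<close>.\<close>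

lemma bilinear_represents_linear_functional:
  fixes B :: "'a::euclidean_space \<Rightarrow> 'a \<Rightarrow> real"
  assumes bl: "bilinear B" and nd: "\<forall>u. (\<forall>v. B u v = 0) \<longrightarrow> u = 0" and lf: "linear f"
  shows "\<exists>z. \<forall>x. f x = B z x"
proof -
  define T where "T z = (\<Sum>b\<in>Basis. B z b *\<^sub>R b)" for z
  have linB2: "linear (\<lambda>y. B z y)" for z using bl by (simp add: bilinear_def)
  have lT: "linear T"
    by (rule linearI) (simp_all add: T_def bilinear_ladd[OF bl] bilinear_lmul[OF bl]
        scaleR_add_left sum.distrib scaleR_sum_right)
  have Tb: "T z \<bullet> b = B z b" if "b \<in> Basis" for z b
    using that by (simp add: T_def inner_sum_left inner_Basis if_distrib cong: if_cong)
  have "inj T"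
    unfolding linear_injective_0[OF lT]
  proof (intro allI impI)
    fix z assume "T z = 0"
    then have "\<forall>b\<in>Basis. B z b = 0" using Tb by (metis inner_zero_left)
    then have "(\<lambda>y. B z y) = (\<lambda>y. 0)"
      by (intro linear_eq_stdbasis linB2) (auto simp: linear_zero)
    then show "z = 0" using nd by metis
  qed
  then have "surj T" using linear_injective_imp_surjective[OF lT] by simp
  then obtain z where z: "T z = (\<Sum>b\<in>Basis. f b *\<^sub>R b)" by (metis surjD)
  have "f = (\<lambda>y. B z y)"
  proof (rule linear_eq_stdbasis[OF lf linB2])
    fix b :: 'a assume b: "b \<in> Basis"
    have "B z b = T z \<bullet> b" using Tb[OF b] by simp
    also have "\<dots> = f b" unfolding z using b
      by (simp add: inner_sum_left inner_Basis if_distrib cong: if_cong)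
    finally show "f b = B z b" by simp
  qed
  then show ?thesis by metis
qed

lemma dim_le_dim_kernel_add_dim_image:
  fixes f :: "'a::euclidean_space \<Rightarrow> 'b::euclidean_space"
  assumes lf: "linear f" and S: "subspace S"
  shows "dim S \<le> dim {x\<in>S. f x = 0} + dim (f ` S)"
proof -
  define A where "A = {x\<in>S. f x = 0}"
  define T where "T = {y \<in> S. \<forall>x\<in>A. orthogonal x y}"
  have sA: "subspace A" using S unfolding A_def subspace_def
    by (auto simp: linear_add[OF lf] linear_scale[OF lf] linear_0[OF lf])
  have sT: "subspace T" using S unfolding T_def subspace_def
    by (auto simp: orthogonal_clauses)
  have eq: "dim T + dim A = dim S" unfolding T_def
    by (rule dim_subspace_orthogonal_to_vectors[OF sA S]) (auto simp: A_def)
  have "inj_on f (span T)"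
    unfolding span_eq_iff[THEN iffD2, OF sT]
  proof (rule linear_inj_on_iff_eq_0[THEN iffD2, OF lf sT], intro ballI impI)
    fix y assume y: "y \<in> T" "f y = 0"
    then have "y \<in> A" by (auto simp: A_def T_def)
    then have "orthogonal y y" using y by (auto simp: T_def)
    then show "y = 0" by (simp add: orthogonal_def)
  qed
  then have "dim (f ` T) = dim T" by (rule dim_image_eq[OF lf])
  moreover have "dim (f ` T) \<le> dim (f ` S)" by (rule dim_subset) (auto simp: T_def)
  ultimately show ?thesis using eq by (simp add: A_def)
qed

lemma subspace_joint_kernel:
  assumes "subspace S" "\<forall>i\<in>I. linear (g i)"
  shows "subspace {x\<in>S. \<forall>i\<in>I. g i x = 0}"
  using assms unfolding subspace_def
  by (simp add: linear_add linear_scale linear_0)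

lemma dim_le_dim_joint_kernel_add_sum_dim_image:
  fixes g :: "nat \<Rightarrow> 'a::euclidean_space \<Rightarrow> 'b::euclidean_space"
  assumes S: "subspace S" and lg: "\<forall>i. linear (g i)"
  shows "dim S \<le> dim {x\<in>S. \<forall>i\<in>{1..m}. g i x = 0} + (\<Sum>i=1..m. dim (g i ` S))"
proof (induction m)
  case 0
  have "{x\<in>S. \<forall>i\<in>{1..0::nat}. g i x = 0} = S" by auto
  then show ?case by simp
next
  case (Suc m)
  define L where "L = {x\<in>S. \<forall>i\<in>{1..m}. g i x = 0}"
  have sL: "subspace L" unfolding L_def
    by (rule subspace_joint_kernel[OF S]) (simp add: lg)
  have eqL: "{x\<in>L. g (Suc m) x = 0} = {x\<in>S. \<forall>i\<in>{1..Suc m}. g i x = 0}"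
  proof -
    have "{1..Suc m} = insert (Suc m) {1..m}" by (rule atLeastAtMostSuc_conv) simp
    then show ?thesis unfolding L_def by auto
  qed
  have "dim L \<le> dim {x\<in>L. g (Suc m) x = 0} + dim (g (Suc m) ` L)"
    by (rule dim_le_dim_kernel_add_dim_image[OF lg[rule_format] sL])
  moreover have "dim (g (Suc m) ` L) \<le> dim (g (Suc m) ` S)"
    by (rule dim_subset, rule image_mono) (unfold L_def, blast)
  moreover have "dim S \<le> dim L + (\<Sum>i=1..m. dim (g i ` S))"
    using Suc.IH unfolding L_def .
  ultimately show ?case unfolding eqL[symmetric] by simp
qed

lemma dim_le_mult_dim_of_joint_kernel_trivial:
  fixes g :: "nat \<Rightarrow> 'a::euclidean_space \<Rightarrow> 'b::euclidean_space"
  assumes "subspace S" "\<forall>i. linear (g i)"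
    and image: "\<forall>i\<in>{1..k}. g i ` S \<subseteq> P"
    and kernel: "{x\<in>S. \<forall>i\<in>{1..k}. g i x = 0} \<subseteq> {0}"
  shows "dim S \<le> k * dim P"
proof -
  have "dim S \<le> dim {x\<in>S. \<forall>i\<in>{1..k}. g i x = 0} + (\<Sum>i=1..k. dim (g i ` S))"
    by (rule dim_le_dim_joint_kernel_add_sum_dim_image[OF assms(1,2)])
  also have "dim {x\<in>S. \<forall>i\<in>{1..k}. g i x = 0} = 0"
    using kernel by (simp add: dim_eq_0)
  also have "(\<Sum>i=1..k. dim (g i ` S)) \<le> (\<Sum>i=1..k. dim P)"
    by (intro sum_mono dim_subset) (use image in auto)
  finally show ?thesis by simp
qed

lemma image_eq_of_joint_kernel_trivial:
  fixes g :: "nat \<Rightarrow> 'a::euclidean_space \<Rightarrow> 'b::euclidean_space"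
  assumes S: "subspace S" and P: "subspace P" and lg: "\<forall>i. linear (g i)"
    and image: "\<forall>i\<in>{1..k}. g i ` S \<subseteq> P"
    and kernel: "{x\<in>S. \<forall>i\<in>{1..k}. g i x = 0} \<subseteq> {0}"
    and tight: "k * dim P \<le> dim S" and i: "i \<in> {1..k}"
  shows "g i ` S = P"
proof (rule subspace_dim_equal[OF linear_subspace_image[OF lg[rule_format] S] P])
  show "g i ` S \<subseteq> P" using image i by blast
  have "dim S \<le> dim {x\<in>S. \<forall>i\<in>{1..k}. g i x = 0} + (\<Sum>j=1..k. dim (g j ` S))"
    by (rule dim_le_dim_joint_kernel_add_sum_dim_image[OF S lg])
  also have "dim {x\<in>S. \<forall>i\<in>{1..k}. g i x = 0} = 0"
    using kernel by (simp add: dim_eq_0)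
  also have "(\<Sum>j=1..k. dim (g j ` S)) = dim (g i ` S) + (\<Sum>j\<in>{1..k}-{i}. dim (g j ` S))"
    using i by (simp add: sum.remove)
  also have "(\<Sum>j\<in>{1..k}-{i}. dim (g j ` S)) \<le> (\<Sum>j\<in>{1..k}-{i}. dim P)"
    by (intro sum_mono dim_subset) (use image in auto)
  also have "(\<Sum>j\<in>{1..k}-{i}. dim P) = (k - 1) * dim P"
    using i by simp
  finally have "k * dim P \<le> dim (g i ` S) + (k - 1) * dim P"
    using tight by simp
  then show "dim P \<le> dim (g i ` S)"
    using i by (cases k) (auto simp: algebra_simps)
qed

lemma sums_eq_UNIV_of_dim_add:
  fixes S T :: "'a::euclidean_space set"
  assumes S: "subspace S" and T: "subspace T"
    and "S \<inter> T \<subseteq> {0}" and "dim S + dim T = DIM('a)"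
  shows "{x + y |x y. x \<in> S \<and> y \<in> T} = UNIV"
proof -
  have "dim (S \<inter> T) = 0" using assms(3) by (simp only: dim_eq_0)
  then have "dim {x + y |x y. x \<in> S \<and> y \<in> T} = DIM('a)"
    using dim_sums_Int[OF S T] assms(4) by linarith
  then have "span {x + y |x y. x \<in> S \<and> y \<in> T} = UNIV" by (rule dim_eq_full[THEN iffD1])
  then show ?thesis using span_eq_iff[THEN iffD2, OF subspace_sums[OF S T]] by simp
qed

definition bilinear_orth :: "('a \<Rightarrow> 'a \<Rightarrow> real) \<Rightarrow> 'a set \<Rightarrow> 'a set" where
  "bilinear_orth B S = {w. \<forall>v\<in>S. B w v = 0}"

lemma subspace_bilinear_orth:
  assumes "bilinear B"
  shows "subspace (bilinear_orth B S)"
  unfolding bilinear_orth_def subspace_def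
  by (simp add: bilinear_lzero[OF assms] bilinear_ladd[OF assms] bilinear_lmul[OF assms])

lemma dim_add_dim_bilinear_orth_le:
  fixes S :: "'a::euclidean_space set"
  assumes "bilinear B" "subspace S" "S \<inter> bilinear_orth B S \<subseteq> {0}"
  shows "dim S + dim (bilinear_orth B S) \<le> DIM('a)"
  using dim_sums_Int[OF assms(2) subspace_bilinear_orth[OF assms(1), of S]] assms(3)
    dim_eq_0[of "S \<inter> bilinear_orth B S"]
    dim_subset_UNIV[of "{x + y |x y. x \<in> S \<and> y \<in> bilinear_orth B S}"]
  by linarith

lemma mem_of_orth_bilinear_orth:
  assumes bl: "bilinear B" and sym: "\<And>u v. B u v = B v u"
    and nd: "\<forall>u. (\<forall>v. B u v = 0) \<longrightarrow> u = 0"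
    and sums: "{x + y |x y. x \<in> S \<and> y \<in> bilinear_orth B S} = UNIV"
    and orth: "\<forall>d\<in>bilinear_orth B S. B z d = 0"
  shows "z \<in> S"
proof -
  obtain a b where ab: "a \<in> S" "b \<in> bilinear_orth B S" "z = a + b"
    using sums by blast
  have "B b v = 0" for v
  proof -
    obtain c d where cd: "c \<in> S" "d \<in> bilinear_orth B S" "v = c + d"
      using sums by blast
    have "B b c = 0" using ab(2) cd(1) by (simp add: bilinear_orth_def)
    moreover have "B a d = 0" using ab(1) cd(2) sym[of a d] by (simp add: bilinear_orth_def)
    moreover have "B b d = B z d - B a d" using ab(3) by (simp add: bilinear_ladd[OF bl])
    ultimately show "B b v = 0"
      using orth cd by (simp add: bilinear_radd[OF bl])
  qed
  then have "b = 0" using nd by blast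
  then show ?thesis using ab by simp
qed

lemma lie_bracket_antisym:
  assumes "lie_bracket br"
  shows "br u v = - br v u"
proof -
  have bl: "bilinear br" and alt: "\<And>u. br u u = 0"
    using assms unfolding lie_bracket_def by auto
  have "br (u + v) (u + v) = br u u + br v u + (br u v + br v v)"
    by (simp only: bilinear_ladd[OF bl] bilinear_radd[OF bl])
  then have "br u v + br v u = 0" by (simp add: alt add.commute)
  then show ?thesis by (simp add: eq_neg_iff_add_eq_0)
qed

lemma quadratic_form_ad_self_orth:
  assumes "lie_bracket br" "quadratic_form br B"
  shows "B z (br z u) = 0"
proof -
  have "B z (br z u) = B (br z u) z"
    using assms(2) by (simp add: quadratic_form_def)
  also have "\<dots> = - B (br z z) u"
    using assms(2) unfolding quadratic_form_def by (metis add_eq_0_iff)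
  also have "\<dots> = 0"
    using assms unfolding lie_bracket_def quadratic_form_def by (simp add: bilinear_lzero)
  finally show ?thesis .
qed

lemma cocycle_eq_form_ad:
  assumes lie: "lie_bracket br" and quad: "quadratic_form br B" and H2: "H2_trivial br"
    and "skew_form \<theta>" "cocycle2 br \<theta>"
  shows "\<exists>z. \<forall>u v. \<theta> u v = B (br z u) v"
proof -
  have bl: "bilinear B" and sym: "\<And>u v. B u v = B v u"
    and nd: "\<forall>u. (\<forall>v. B u v = 0) \<longrightarrow> u = 0"
    and inv: "\<And>u v w. B (br u v) w + B (br u w) v = 0"
    using quad unfolding quadratic_form_def by auto
  obtain f where lf: "linear f" and f: "\<And>u v. \<theta> u v = f (br u v)"
    using H2 assms(4,5) unfolding H2_trivial_def by blast
  obtain z where z: "\<And>x. f x = B z x"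
    using bilinear_represents_linear_functional[OF bl nd lf] by blast
  have "\<theta> u v = B (br z u) v" for u v
  proof -
    have "\<theta> u v = B (br u v) z" using f z sym by metis
    also have "\<dots> = - B (br u z) v" using inv[of u v z] by linarith
    also have "\<dots> = B (br z u) v"
      by (simp add: lie_bracket_antisym[OF lie, of u z] bilinear_lneg[OF bl])
    finally show ?thesis .
  qed
  then show ?thesis by blast
qed

theorem mainTheorem5:
  fixes br :: "'a::euclidean_space \<Rightarrow> 'a \<Rightarrow> 'a"
    and B :: "'a \<Rightarrow> 'a \<Rightarrow> real"
    and h :: "'a set"
    and \<theta> :: "nat \<Rightarrow> 'a \<Rightarrow> 'a \<Rightarrow> real"
    and n k :: nat
  assumes "lie_bracket br"
    and "quadratic_form br B"
    and "H2_trivial br"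
    and "k_symplectic br n k h \<theta>"
  shows "\<exists>u\<in>h. u \<noteq> 0 \<and> (\<forall>v\<in>h. B u v = 0)"
proof (rule ccontr)
  define P where "P = bilinear_orth B h"
  assume "\<not> (\<exists>u\<in>h. u \<noteq> 0 \<and> (\<forall>v\<in>h. B u v = 0))"
  then have int0: "h \<inter> P \<subseteq> {0}" by (auto simp: P_def bilinear_orth_def)
  have bl: "bilinear B" and sym: "\<And>u v. B u v = B v u"
    and nd: "\<forall>u. (\<forall>v. B u v = 0) \<longrightarrow> u = 0"
    using assms(2) unfolding quadratic_form_def by auto
  have n1: "n \<ge> 1" and k1: "k \<ge> 1" and DIM: "DIM('a) = n * (k + 1)"
    and sh: "subspace h" and dimh: "dim h = n * k"
    and clos: "\<And>u v. u \<in> h \<Longrightarrow> v \<in> h \<Longrightarrow> br u v \<in> h"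
    and ker: "\<And>u. (\<forall>i\<in>{1..k}. \<forall>v. \<theta> i u v = 0) \<Longrightarrow> u = 0"
    and cocycle: "\<And>i. i \<in> {1..k} \<Longrightarrow> skew_form (\<theta> i) \<and> cocycle2 br (\<theta> i)"
    and iso: "\<And>i u v. i \<in> {1..k} \<Longrightarrow> u \<in> h \<Longrightarrow> v \<in> h \<Longrightarrow> \<theta> i u v = 0"
    using assms(4) unfolding k_symplectic_def by auto
  have "\<forall>i\<in>{1..k}. \<exists>z. \<forall>u v. \<theta> i u v = B (br z u) v"
    using cocycle_eq_form_ad[OF assms(1-3)] cocycle by blast
  then obtain z where z: "\<And>i u v. i \<in> {1..k} \<Longrightarrow> \<theta> i u v = B (br (z i) u) v"
    by metis
  have lad: "\<forall>i. linear (br (z i))" using assms(1) by (simp add: lie_bracket_def bilinear_def)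
  have image: "\<forall>i\<in>{1..k}. br (z i) ` h \<subseteq> P"
    using z iso by (auto simp: P_def bilinear_orth_def)
  have kernel: "{x\<in>h. \<forall>i\<in>{1..k}. br (z i) x = 0} \<subseteq> {0}"
    using z ker by (auto simp: bilinear_lzero[OF bl])
  have "dim P \<le> n"
    using dim_add_dim_bilinear_orth_le[OF bl sh int0[unfolded P_def]] DIM dimh by (simp add: P_def)
  moreover have "n * k \<le> k * dim P"
    using dim_le_mult_dim_of_joint_kernel_trivial[OF sh lad image kernel] dimh by simp
  ultimately have dimP: "dim P = n" using k1 by (simp add: mult.commute)
  have sP: "subspace P" unfolding P_def by (rule subspace_bilinear_orth[OF bl])
  have ad1: "br (z 1) ` h = P"
    using image_eq_of_joint_kernel_trivial[OF sh sP lad image kernel] dimP dimh k1 by simp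
  have "{x + y |x y. x \<in> h \<and> y \<in> P} = UNIV"
    using sums_eq_UNIV_of_dim_add[OF sh sP int0] dimP dimh DIM by (simp add: algebra_simps)
  moreover have "\<forall>d\<in>P. B (z 1) d = 0"
    using ad1 quadratic_form_ad_self_orth[OF assms(1,2)] by blast
  ultimately have "z 1 \<in> h"
    unfolding P_def by (rule mem_of_orth_bilinear_orth[OF bl sym nd])
  then have "P \<subseteq> h" using ad1 clos by blast
  then have "dim P = 0" using int0 by (simp only: dim_eq_0) blast
  then show False using dimP n1 by simp
qed

end
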